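(* Let $a>0$, $\rho>0$ and let $(k_j)_{j\ge 1}$ be a sequence of positive reals. Let $X_1,X_2,\dots$ be random variables such that each $X_j$ has the $\mathrm{GWD}(a,k_j;\rho)$ distribution and, for each $n\ge 1$, the vector $(X_1,\dots,X_n)$ has the $\mathrm{MGWD}(a;k_1,\dots,k_n;\rho)$ distribution. Put $S=\sum_{j=1}^\infty X_j$. If $m=\sum_{j=1}^\infty k_j<\infty$, then $S<\infty$ with probability $1$ and $S$ has the $\mathrm{GWD}(a,m;\rho)$ distribution. If $\sum_{j=1}^\infty k_j=\infty$, then $S=\infty$ with probability $1$.
   Context: For $x>0$ and $\beta\ge 0$ write $x_{(\beta)}=\Gamma(x+\beta)/\Gamma(x)$. For $a,k,\rho>0$ the generalized Waring distribution $\mathrm{GWD}(a,k;\rho)$ is the probability law on $\{0,1,2,\dots\}$ given by $P(X=n)=\frac{\rho_{(k)}}{(\rho+a)_{(k)}}\,\frac{a_{(n)}\,k_{(n)}}{(\rho+a+k)_{(n)}}\,\frac{1}{n!}$, $n=0,1,2,\dots$. For $a,\rho>0$ and $k_1,\dots,k_s>0$, the multivariate generalized Waring distribution $\mathrm{MGWD}(a;k_1,\dots,k_s;\rho)$ is the law of a random vector $(X_1,\dots,X_s)$ on $\{0,1,2,\dots\}^s$ with $P(X_i=x_i,\ i=1,\dots,s)=\frac{\rho_{(\sum_i k_i)}\,a_{(\sum_i x_i)}}{(\rho+a)_{(\sum_i k_i+\sum_i x_i)}}\prod_{i=1}^s\frac{(k_i)_{(x_i)}}{x_i!}$. *)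

theory Defs
  imports "HOL-Probability.Probability"
begin

definition rfac :: "real \<Rightarrow> real \<Rightarrow> real" where
  "rfac x b = Gamma (x + b) / Gamma x"

definition GWD :: "real \<Rightarrow> real \<Rightarrow> real \<Rightarrow> nat \<Rightarrow> real" where
  "GWD a k \<rho> n = rfac \<rho> k / rfac (\<rho> + a) k
      * (rfac a (real n) * rfac k (real n) / rfac (\<rho> + a + k) (real n)) / fact n"

text \<open>Joint mass function of MGWD(a; k_0,...,k_{s-1}; rho) at (x_0,...,x_{s-1}).\<close>
definition MGWD :: "real \<Rightarrow> (nat \<Rightarrow> real) \<Rightarrow> real \<Rightarrow> nat \<Rightarrow> (nat \<Rightarrow> nat) \<Rightarrow> real" where
  "MGWD a k \<rho> s x =
     rfac \<rho> (\<Sum>i<s. k i) * rfac a (real (\<Sum>i<s. x i))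
       / rfac (\<rho> + a) ((\<Sum>i<s. k i) + real (\<Sum>i<s. x i))
     * (\<Prod>i<s. rfac (k i) (real (x i)) / fact (x i))"

end

theory Submission
  imports Defs "HOL-Computational_Algebra.Formal_Power_Series"
begin

(*
  The partial sum X_0 + ... + X_n is GWD(a, k_0 + ... + k_n; rho): summing the MGWD mass
  function over the weak compositions of t (encoded as multisets of size t) is the
  multivariate Vandermonde identity for rising factorials. Since {S < t} is the decreasing
  intersection of the events {X_0 + ... + X_n < t}, the law of S is the pointwise limit q of
  these GWD laws, and P(S < \<infinity>) = \<Sum> q. If \<Sum> k = m < \<infinity>, then q = GWD(a, m; rho) by continuity in
  the shape parameter, and \<Sum> q = 1 by dominated convergence: the hypergeometric weights
  increase with the shape parameter while the normalising constant stays at most 1, by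
  log-convexity of Gamma. If \<Sum> k = \<infinity>, the normalising constant decays like K powr -a, so
  q = 0 and S = \<infinity> almost surely.
*)

section \<open>Rising factorials and weak compositions\<close>

(* the power series of (1 - z) powr - c *)
definition rising_fps :: "'a::field_char_0 \<Rightarrow> 'a fps" where
  "rising_fps c = Abs_fps (\<lambda>j. pochhammer c j / fact j)"

lemma rising_fps_nth [simp]: "fps_nth (rising_fps c) j = pochhammer c j / fact j"
  by (simp add: rising_fps_def)

lemma rising_fps_0 [simp]: "rising_fps 0 = 1"
  by (rule fps_ext) (auto simp: pochhammer_0_left)

lemma rising_fps_add: "rising_fps (c + d) = rising_fps c * rising_fps d"
proof (rule fps_ext)
  fix n
  have sign: "pochhammer x j / fact j = (-1) ^ j * ((- x) gchoose j)" for x :: 'a and j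
    by (simp add: gbinomial_pochhammer)
  have "fps_nth (rising_fps c * rising_fps d) n
      = (\<Sum>i=0..n. (-1) ^ n * (((- c) gchoose i) * ((- d) gchoose (n - i))))"
    unfolding fps_mult_nth rising_fps_nth sign
    by (intro sum.cong refl) (simp add: mult_ac flip: power_add)
  also have "\<dots> = (-1) ^ n * ((- c - d) gchoose n)"
    by (simp add: gbinomial_Vandermonde flip: sum_distrib_left)
  finally show "fps_nth (rising_fps (c + d)) n = fps_nth (rising_fps c * rising_fps d) n"
    by (simp add: sign)
qed

lemma prod_rising_fps: "(\<Prod>i\<in>A. rising_fps (k i)) = rising_fps (\<Sum>i\<in>A. k i)"
  by (induction A rule: infinite_finite_induct) (simp_all add: rising_fps_add)

lemma sum_multisets_of_size_pochhammer:
  fixes k :: "'b \<Rightarrow> 'a::field_char_0"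
  assumes "finite A"
  shows "(\<Sum>X\<in>multisets_of_size A t. \<Prod>i\<in>A. pochhammer (k i) (count X i) / fact (count X i))
       = pochhammer (\<Sum>i\<in>A. k i) t / fact t"
  using fps_prod_nth'[OF assms, of "\<lambda>i. rising_fps (k i)" t] by (simp add: prod_rising_fps)

lemma sum_count_eq_size: "finite A \<Longrightarrow> set_mset X \<subseteq> A \<Longrightarrow> (\<Sum>i\<in>A. count X i) = size X"
  by (auto simp: size_multiset_overloaded_eq not_in_iff intro!: sum.mono_neutral_right)

lemma rfac_of_nat: "(y::real) > 0 \<Longrightarrow> rfac y (real j) = pochhammer y j"
  by (subst pochhammer_Gamma) (auto simp: rfac_def dest: nonpos_Ints_nonpos)

lemma rfac_add_of_nat:
  assumes "c + K > 0"
  shows "rfac c (K + real t) = rfac c K * pochhammer (c + K) t"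
proof -
  have "c + K \<notin> \<int>\<^sub>\<le>\<^sub>0"
    using assms by (auto dest: nonpos_Ints_nonpos)
  then have "Gamma (c + K + real t) = pochhammer (c + K) t * Gamma (c + K)"
    using assms rfac_of_nat[of "c + K" t] by (simp add: rfac_def divide_eq_eq Gamma_eq_zero_iff)
  then show ?thesis
    by (simp add: rfac_def add.assoc[symmetric])
qed

lemma sum_MGWD_multisets_of_size:
  fixes k :: "nat \<Rightarrow> real"
  assumes "a > 0" "\<rho> > 0" "\<And>i. k i > 0" "n \<ge> 1"
  shows "(\<Sum>X\<in>multisets_of_size {..<n} t. MGWD a k \<rho> n (count X)) = GWD a (\<Sum>i<n. k i) \<rho> t"
proof -
  define K where "K = (\<Sum>i<n. k i)"
  have "K > 0"
    unfolding K_def using assms by (intro sum_pos) (auto simp: lessThan_empty_iff)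
  define c where "c = rfac \<rho> K * pochhammer a t / (rfac (\<rho> + a) K * pochhammer (\<rho> + a + K) t)"
  have "MGWD a k \<rho> n (count X) = c * (\<Prod>i<n. pochhammer (k i) (count X i) / fact (count X i))"
    if "X \<in> multisets_of_size {..<n} t" for X
  proof -
    have "(\<Sum>i<n. count X i) = t"
      using that by (simp add: multisets_of_size_def sum_count_eq_size)
    moreover have "rfac (\<rho> + a) (K + real t) = rfac (\<rho> + a) K * pochhammer (\<rho> + a + K) t"
      using assms \<open>K > 0\<close> by (simp add: rfac_add_of_nat)
    ultimately show ?thesis
      using assms by (simp add: MGWD_def c_def rfac_of_nat flip: K_def)
  qed
  then have "(\<Sum>X\<in>multisets_of_size {..<n} t. MGWD a k \<rho> n (count X))
      = c * (\<Sum>X\<in>multisets_of_size {..<n} t. \<Prod>i<n. pochhammer (k i) (count X i) / fact (count X i))"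
    by (simp add: sum_distrib_left)
  also have "\<dots> = c * (pochhammer K t / fact t)"
    by (simp add: sum_multisets_of_size_pochhammer K_def)
  also have "\<dots> = GWD a K \<rho> t"
    using assms \<open>K > 0\<close> by (simp add: c_def GWD_def rfac_of_nat)
  finally show ?thesis
    by (simp add: K_def)
qed

section \<open>Ratios of Gamma values\<close>

lemma convex_on_slope_mono:
  fixes f :: "real \<Rightarrow> real"
  assumes f: "convex_on I f" and I: "x \<in> I" "u \<in> I" "v \<in> I"
    and order: "x < y" "u < v" "x \<le> u" "y \<le> v"
  shows "(f y - f x) / (y - x) \<le> (f v - f u) / (v - u)"
proof -
  have swap: "(f p - f q) / (p - q) = (f q - f p) / (q - p)" for p q
    by (metis minus_diff_eq minus_divide_divide)
  have "(f y - f x) / (y - x) \<le> (f v - f x) / (v - x)"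
  proof (cases "y = v")
    case False
    then show ?thesis
      using convex_on_slope_le(1)[OF f I(1,3), of y] order by (simp add: swap)
  qed simp
  also have "\<dots> \<le> (f v - f u) / (v - u)"
  proof (cases "x = u")
    case False
    then show ?thesis
      using convex_on_slope_le(2)[OF f I(1,3), of u] order by (simp add: swap)
  qed simp
  finally show ?thesis .
qed

lemma Gamma_div_Gamma_eq_exp:
  fixes x y :: real
  assumes "x > 0" "y > 0"
  shows "Gamma x / Gamma y = exp (ln (Gamma x) - ln (Gamma y))"
  using assms by (simp add: exp_diff)

lemma Gamma_div_Gamma_add_antimono:
  fixes x y a :: real
  assumes "0 < x" "x \<le> y" "a > 0"
  shows "Gamma y / Gamma (y + a) \<le> Gamma x / Gamma (x + a)"
proof -
  have "(ln (Gamma (x + a)) - ln (Gamma x)) / a \<le> (ln (Gamma (y + a)) - ln (Gamma y)) / a"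
    using convex_on_slope_mono[OF log_convex_Gamma_real, of x y "y + a" "x + a"] assms by simp
  then have "ln (Gamma y) - ln (Gamma (y + a)) \<le> ln (Gamma x) - ln (Gamma (x + a))"
    using assms by (simp add: divide_right_mono_neg divide_le_cancel)
  then show ?thesis
    using assms by (simp add: Gamma_div_Gamma_eq_exp)
qed

lemma Gamma_div_Gamma_add_le_powr:
  fixes x a :: real
  assumes "x > 1" "a > 0"
  shows "Gamma x / Gamma (x + a) \<le> (x - 1) powr (- a)"
proof -
  have "x - 1 \<notin> \<int>\<^sub>\<le>\<^sub>0"
    using assms by (auto dest: nonpos_Ints_nonpos)
  then have "Gamma x = (x - 1) * Gamma (x - 1)"
    using Gamma_plus1[of "x - 1"] by simp
  then have "ln (Gamma x) - ln (Gamma (x - 1)) = ln (x - 1)"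
    using assms Gamma_real_pos[of "x - 1"] by (simp add: ln_mult del: Gamma_real_pos)
  moreover have "(ln (Gamma x) - ln (Gamma (x - 1))) / (x - (x - 1))
      \<le> (ln (Gamma (x + a)) - ln (Gamma x)) / (x + a - x)"
    using convex_on_slope_mono[OF log_convex_Gamma_real, of "x - 1" x "x + a" x] assms by simp
  ultimately have "a * ln (x - 1) \<le> ln (Gamma (x + a)) - ln (Gamma x)"
    using assms by (simp add: field_simps)
  then show ?thesis
    using assms by (simp add: Gamma_div_Gamma_eq_exp powr_def)
qed

lemma pochhammer_div_pochhammer_eq_prod:
  "pochhammer K j / pochhammer (c + K) j = (\<Prod>i<j. (K + real i) / (c + K + real i))"
  by (simp add: pochhammer_prod prod_dividef atLeast0LessThan)

lemma pochhammer_div_pochhammer_mono: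
  fixes c K L :: real
  assumes "0 < K" "K \<le> L" "c > 0"
  shows "pochhammer K j / pochhammer (c + K) j \<le> pochhammer L j / pochhammer (c + L) j"
  unfolding pochhammer_div_pochhammer_eq_prod
proof (rule prod_mono)
  fix i
  have "(K + real i) * (c + L + real i) \<le> (L + real i) * (c + K + real i)"
    using assms by (simp add: algebra_simps mult_left_mono)
  then show "0 \<le> (K + real i) / (c + K + real i) \<and>
      (K + real i) / (c + K + real i) \<le> (L + real i) / (c + L + real i)"
    using assms by (simp add: divide_simps)
qed

lemma pochhammer_div_pochhammer_le_1:
  fixes c K :: real
  assumes "0 < K" "c > 0"
  shows "pochhammer K j / pochhammer (c + K) j \<le> 1"
  unfolding pochhammer_div_pochhammer_eq_prod
  using assms by (intro prod_le_1) auto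

section \<open>The generalized Waring distribution\<close>

definition GWD_norm :: "real \<Rightarrow> real \<Rightarrow> real \<Rightarrow> real" where
  "GWD_norm a \<rho> K = rfac \<rho> K / rfac (\<rho> + a) K"

definition GWD_weight :: "real \<Rightarrow> real \<Rightarrow> real \<Rightarrow> nat \<Rightarrow> real" where
  "GWD_weight a \<rho> K j = pochhammer a j * (pochhammer K j / pochhammer (\<rho> + a + K) j) / fact j"

lemma GWD_eq_norm_weight:
  assumes "a > 0" "\<rho> > 0" "K > 0"
  shows "GWD a K \<rho> j = GWD_norm a \<rho> K * GWD_weight a \<rho> K j"
  using assms by (simp add: GWD_def GWD_norm_def GWD_weight_def rfac_of_nat)

lemma GWD_norm_pos: "a > 0 \<Longrightarrow> \<rho> > 0 \<Longrightarrow> K \<ge> 0 \<Longrightarrow> GWD_norm a \<rho> K > 0"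
  by (simp add: GWD_norm_def rfac_def)

lemma GWD_norm_eq:
  assumes "a > 0" "\<rho> > 0" "K \<ge> 0"
  shows "GWD_norm a \<rho> K = Gamma (\<rho> + K) / Gamma (\<rho> + K + a) / (Gamma \<rho> / Gamma (\<rho> + a))"
  using assms by (simp add: GWD_norm_def rfac_def field_simps add_ac)

lemma GWD_norm_le_1:
  assumes "a > 0" "\<rho> > 0" "K \<ge> 0"
  shows "GWD_norm a \<rho> K \<le> 1"
  unfolding GWD_norm_eq[OF assms]
  using Gamma_div_Gamma_add_antimono[of \<rho> "\<rho> + K" a] assms
  by (subst divide_le_eq_1_pos) (simp_all add: add_ac)

lemma GWD_norm_le_powr:
  assumes "a > 0" "\<rho> > 0" "K \<ge> 0" "\<rho> + K > 1"
  shows "GWD_norm a \<rho> K \<le> Gamma (\<rho> + a) / Gamma \<rho> * (\<rho> + K - 1) powr (- a)"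
  using Gamma_div_Gamma_add_le_powr[of "\<rho> + K" a] assms
  by (simp add: GWD_norm_eq divide_simps mult_ac)

lemma GWD_weight_nonneg: "a > 0 \<Longrightarrow> \<rho> > 0 \<Longrightarrow> K > 0 \<Longrightarrow> GWD_weight a \<rho> K j \<ge> 0"
  by (simp add: GWD_weight_def pochhammer_pos less_imp_le)

lemma GWD_weight_mono:
  "a > 0 \<Longrightarrow> \<rho> > 0 \<Longrightarrow> 0 < K \<Longrightarrow> K \<le> L \<Longrightarrow> GWD_weight a \<rho> K j \<le> GWD_weight a \<rho> L j"
  unfolding GWD_weight_def
  by (intro divide_right_mono mult_left_mono pochhammer_div_pochhammer_mono[of K L "\<rho> + a"])
     (auto simp: pochhammer_pos less_imp_le)

lemma GWD_weight_le:
  "a > 0 \<Longrightarrow> \<rho> > 0 \<Longrightarrow> 0 < K \<Longrightarrow> GWD_weight a \<rho> K j \<le> pochhammer a j / fact j"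
  unfolding GWD_weight_def
  using mult_left_mono[OF pochhammer_div_pochhammer_le_1[of K "\<rho> + a" j], of "pochhammer a j"]
  by (intro divide_right_mono) (auto simp: pochhammer_pos less_imp_le add.assoc)

lemma GWD_nonneg: "a > 0 \<Longrightarrow> \<rho> > 0 \<Longrightarrow> K > 0 \<Longrightarrow> GWD a K \<rho> j \<ge> 0"
  by (simp add: GWD_eq_norm_weight GWD_norm_pos GWD_weight_nonneg less_imp_le)

lemma GWD_le_GWD_div_norm:
  assumes "a > 0" "\<rho> > 0" "0 < K" "K \<le> m"
  shows "GWD a K \<rho> j \<le> GWD a m \<rho> j / GWD_norm a \<rho> m"
proof -
  have "GWD a K \<rho> j \<le> GWD_weight a \<rho> K j"
    using GWD_norm_le_1[of a \<rho> K] GWD_norm_pos[of a \<rho> K] GWD_weight_nonneg[of a \<rho> K j] assms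
    by (simp add: GWD_eq_norm_weight mult_left_le_one_le)
  also have "\<dots> \<le> GWD_weight a \<rho> m j"
    using assms by (rule GWD_weight_mono)
  also have "\<dots> = GWD a m \<rho> j / GWD_norm a \<rho> m"
    using assms GWD_norm_pos[of a \<rho> m] by (simp add: GWD_eq_norm_weight)
  finally show ?thesis .
qed

lemma tendsto_GWD:
  assumes "a > 0" "\<rho> > 0" "m > 0" "(K \<longlongrightarrow> m) F"
  shows "((\<lambda>x. GWD a (K x) \<rho> j) \<longlongrightarrow> GWD a m \<rho> j) F"
  unfolding GWD_def rfac_def using assms
  by (intro tendsto_intros) (auto simp: Gamma_eq_zero_iff dest: nonpos_Ints_nonpos)

lemma GWD_tendsto_0_at_top:
  assumes "a > 0" "\<rho> > 0"
  shows "((\<lambda>K. GWD a K \<rho> j) \<longlongrightarrow> 0) at_top"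
proof (rule tendsto_sandwich)
  define C where "C = Gamma (\<rho> + a) / Gamma \<rho> * (pochhammer a j / fact j)"
  show "\<forall>\<^sub>F K in at_top. 0 \<le> GWD a K \<rho> j"
    using eventually_gt_at_top[of 0] by eventually_elim (use assms in \<open>simp add: GWD_nonneg\<close>)
  show "\<forall>\<^sub>F K in at_top. GWD a K \<rho> j \<le> C * (\<rho> + K - 1) powr (- a)"
    using eventually_gt_at_top[of 1]
  proof eventually_elim
    case (elim K)
    have "GWD a K \<rho> j \<le> GWD_norm a \<rho> K * (pochhammer a j / fact j)"
      using assms elim GWD_norm_pos[of a \<rho> K] GWD_weight_le[of a \<rho> K j]
      by (simp add: GWD_eq_norm_weight del: times_divide_eq_right)
    also have "\<dots> \<le> Gamma (\<rho> + a) / Gamma \<rho> * (\<rho> + K - 1) powr (- a) * (pochhammer a j / fact j)"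
      using assms elim by (intro mult_right_mono GWD_norm_le_powr) (auto simp: pochhammer_pos less_imp_le)
    also have "\<dots> = C * (\<rho> + K - 1) powr (- a)"
      by (simp add: C_def)
    finally show ?case .
  qed
  have "LIM K at_top. (\<rho> - 1) + K :> at_top"
    by (intro filterlim_tendsto_add_at_top[OF tendsto_const] filterlim_ident)
  then have "((\<lambda>K. (\<rho> + K - 1) powr (- a)) \<longlongrightarrow> 0) at_top"
    using assms by (intro tendsto_neg_powr) (simp_all add: algebra_simps)
  then show "((\<lambda>K. C * (\<rho> + K - 1) powr (- a)) \<longlongrightarrow> 0) at_top"
    by (intro tendsto_mult_right_zero)
qed simp

lemma GWD_sums_1_of_tendsto:
  assumes "a > 0" "\<rho> > 0" "m > 0" and K_lim: "K \<longlonglongrightarrow> m"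
    and K_bounds: "\<And>n. 0 < K n" "\<And>n. K n \<le> m"
    and sums_1: "\<And>n. GWD a (K n) \<rho> sums 1"
  shows "GWD a m \<rho> sums 1"
proof -
  have lim: "(\<lambda>n. GWD a (K n) \<rho> j) \<longlonglongrightarrow> GWD a m \<rho> j" for j
    using assms by (intro tendsto_GWD)
  have summable: "summable (GWD a m \<rho>)"
  proof (rule bounded_imp_summable)
    show "GWD a m \<rho> j \<ge> 0" for j
      using assms by (simp add: GWD_nonneg)
    show "(\<Sum>j\<le>t. GWD a m \<rho> j) \<le> 1" for t
    proof (rule LIMSEQ_le_const2)
      show "(\<lambda>n. \<Sum>j\<le>t. GWD a (K n) \<rho> j) \<longlonglongrightarrow> (\<Sum>j\<le>t. GWD a m \<rho> j)"
        by (intro tendsto_sum lim)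
      show "\<exists>N. \<forall>n\<ge>N. (\<Sum>j\<le>t. GWD a (K n) \<rho> j) \<le> 1"
        using sums_1 assms K_bounds
        by (metis GWD_nonneg sums_unique sum_le_suminf sums_summable finite_atMost)
    qed
  qed
  have "(\<lambda>n. \<Sum>j. GWD a (K n) \<rho> j) \<longlonglongrightarrow> (\<Sum>j. GWD a m \<rho> j)"
  proof (rule tannerys_theorem[THEN conjunct2, THEN conjunct2])
    show "\<forall>\<^sub>F (j, n) in at_top \<times>\<^sub>F sequentially.
        norm (GWD a (K n) \<rho> j) \<le> GWD a m \<rho> j / GWD_norm a \<rho> m"
      using assms K_bounds by (intro always_eventually) (auto simp: GWD_nonneg GWD_le_GWD_div_norm)
    show "summable (\<lambda>j. GWD a m \<rho> j / GWD_norm a \<rho> m)"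
      using summable by (rule summable_divide)
  qed (use lim in simp_all)
  moreover have "(\<Sum>j. GWD a (K n) \<rho> j) = 1" for n
    using sums_1 sums_unique by metis
  ultimately have "(\<Sum>j. GWD a m \<rho> j) = 1"
    by (simp add: LIMSEQ_const_iff)
  then show ?thesis
    using summable by (simp add: sums_iff)
qed

section \<open>Sums of natural-valued random variables\<close>

lemma suminf_of_nat_less_of_nat_iff:
  fixes f :: "nat \<Rightarrow> nat"
  shows "(\<Sum>j. ennreal (real (f j))) < of_nat t \<longleftrightarrow> (\<forall>n. (\<Sum>i<n. f i) < t)"
proof -
  have sup: "(\<Sum>j. ennreal (real (f j))) = (SUP n. of_nat (\<Sum>i<n. f i))"
    by (simp add: suminf_eq_SUP flip: ennreal_of_nat_eq_real_of_nat)
  show ?thesis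
  proof
    assume less: "(\<Sum>j. ennreal (real (f j))) < of_nat t"
    show "\<forall>n. (\<Sum>i<n. f i) < t"
    proof
      fix n
      have "of_nat (\<Sum>i<n. f i) \<le> (\<Sum>j. ennreal (real (f j)))"
        unfolding sup by (rule SUP_upper) simp
      then have "(of_nat (\<Sum>i<n. f i) :: ennreal) < of_nat t"
        using less by (rule le_less_trans)
      then show "(\<Sum>i<n. f i) < t"
        by (simp del: of_nat_sum)
    qed
  next
    assume bounded: "\<forall>n. (\<Sum>i<n. f i) < t"
    then have "t > 0"
      by (metis lessThan_0 sum.empty)
    have "(\<Sum>i<n. f i) \<le> t - 1" for n
      using bounded[rule_format, of n] by arith
    then have "(\<Sum>j. ennreal (real (f j))) \<le> of_nat (t - 1)"
      unfolding sup by (intro SUP_least) (simp del: of_nat_sum)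
    also have "\<dots> < of_nat t"
      using \<open>t > 0\<close> by simp
    finally show "(\<Sum>j. ennreal (real (f j))) < of_nat t" .
  qed
qed

lemma suminf_of_nat_le_of_nat_iff:
  fixes f :: "nat \<Rightarrow> nat"
  shows "(\<Sum>j. ennreal (real (f j))) \<le> of_nat t \<longleftrightarrow> (\<forall>n. (\<Sum>i<n. f i) \<le> t)"
  by (simp add: suminf_eq_SUP SUP_le_iff flip: of_nat_sum ennreal_of_nat_eq_real_of_nat)

lemma suminf_of_nat_eq_of_nat_iff:
  fixes f :: "nat \<Rightarrow> nat"
  shows "(\<Sum>j. ennreal (real (f j))) = of_nat t \<longleftrightarrow>
    (\<Sum>j. ennreal (real (f j))) < of_nat (Suc t) \<and> \<not> (\<Sum>j. ennreal (real (f j))) < of_nat t"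
proof -
  have "(\<Sum>j. ennreal (real (f j))) < of_nat (Suc t) \<longleftrightarrow> (\<Sum>j. ennreal (real (f j))) \<le> of_nat t"
    unfolding suminf_of_nat_less_of_nat_iff suminf_of_nat_le_of_nat_iff by (simp add: less_Suc_eq_le)
  then show ?thesis
    by (metis antisym not_less order_refl)
qed

lemma (in finite_measure) distribution_suminf_from_partial_sums:
  fixes Y :: "nat \<Rightarrow> 'a \<Rightarrow> nat" and q :: "nat \<Rightarrow> real"
  assumes [measurable]: "\<And>i. Y i \<in> measurable M (count_space UNIV)"
    and partial_sums_tendsto: "\<And>t. (\<lambda>n. measure M {\<omega>\<in>space M. (\<Sum>i<n. Y i \<omega>) = t}) \<longlonglongrightarrow> q t"
  defines "S \<equiv> \<lambda>\<omega>. \<Sum>j. ennreal (real (Y j \<omega>))"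
  shows "q sums measure M {\<omega>\<in>space M. S \<omega> < \<infinity>}"
    and "measure M {\<omega>\<in>space M. S \<omega> = ennreal (real t)} = q t"
proof -
  define L where "L t = {\<omega>\<in>space M. S \<omega> < of_nat t}" for t
  have L_sets [measurable]: "L t \<in> sets M" for t
    unfolding L_def S_def by measurable
  have L_mono: "L t \<subseteq> L t'" if "t \<le> t'" for t t'
    using that unfolding L_def by (auto intro: less_le_trans)
  have L_eq: "L t = (\<Inter>n. {\<omega>\<in>space M. (\<Sum>i<n. Y i \<omega>) < t})" for t
    unfolding L_def S_def suminf_of_nat_less_of_nat_iff by auto
  have measure_L: "measure M (L t) = (\<Sum>j<t. q j)" for t
  proof -
    have "(\<lambda>n. measure M {\<omega>\<in>space M. (\<Sum>i<n. Y i \<omega>) < t}) \<longlonglongrightarrow> measure M (L t)"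
      unfolding L_eq
      by (rule finite_Lim_measure_decseq) (auto simp: decseq_def intro: le_less_trans[OF sum_mono2])
    moreover have "measure M {\<omega>\<in>space M. (\<Sum>i<n. Y i \<omega>) < t}
        = (\<Sum>j<t. measure M {\<omega>\<in>space M. (\<Sum>i<n. Y i \<omega>) = j})" for n
    proof -
      have "{\<omega>\<in>space M. (\<Sum>i<n. Y i \<omega>) < t} = (\<Union>j<t. {\<omega>\<in>space M. (\<Sum>i<n. Y i \<omega>) = j})"
        by auto
      then show ?thesis
        by (simp only:) (rule finite_measure_finite_Union, auto simp: disjoint_family_on_def)
    qed
    ultimately show ?thesis
      by (simp add: LIMSEQ_unique[OF _ tendsto_sum[OF partial_sums_tendsto]])
  qed
  have "{\<omega>\<in>space M. S \<omega> < \<infinity>} = (\<Union>t. L t)"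
    unfolding L_def using ennreal_Ex_less_of_nat by (auto intro: less_le_trans)
  moreover have "(\<lambda>t. measure M (L t)) \<longlonglongrightarrow> measure M (\<Union>t. L t)"
    using L_sets L_mono by (intro finite_Lim_measure_incseq) (auto simp: incseq_def)
  ultimately show "q sums measure M {\<omega>\<in>space M. S \<omega> < \<infinity>}"
    by (simp add: sums_def measure_L)
  have "{\<omega>\<in>space M. S \<omega> = ennreal (real t)} = {\<omega>\<in>space M. S \<omega> = of_nat t}"
    by (simp add: ennreal_of_nat_eq_real_of_nat)
  also have "\<dots> = L (Suc t) - L t"
    unfolding L_def S_def by (auto simp: suminf_of_nat_eq_of_nat_iff simp del: of_nat_Suc)
  finally have law: "measure M {\<omega>\<in>space M. S \<omega> = ennreal (real t)} = measure M (L (Suc t)) - measure M (L t)"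
    using finite_measure_Diff[OF L_sets L_sets L_mono[of t "Suc t"]] by simp
  show "measure M {\<omega>\<in>space M. S \<omega> = ennreal (real t)} = q t"
    unfolding law measure_L by simp
qed

lemma (in finite_measure) measure_sum_eq_sum_multisets_of_size:
  fixes Y :: "nat \<Rightarrow> 'a \<Rightarrow> nat"
  assumes [measurable]: "\<And>i. Y i \<in> measurable M (count_space UNIV)"
  shows "measure M {\<omega>\<in>space M. (\<Sum>i<n. Y i \<omega>) = t}
       = (\<Sum>X\<in>multisets_of_size {..<n} t. measure M {\<omega>\<in>space M. \<forall>i<n. Y i \<omega> = count X i})"
proof -
  have "{\<omega>\<in>space M. (\<Sum>i<n. Y i \<omega>) = t}
      = (\<Union>X\<in>multisets_of_size {..<n} t. {\<omega>\<in>space M. \<forall>i<n. Y i \<omega> = count X i})"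
  proof (intro equalityI subsetI)
    fix \<omega> assume \<omega>: "\<omega> \<in> {\<omega>\<in>space M. (\<Sum>i<n. Y i \<omega>) = t}"
    define X where "X = (\<Sum>i<n. replicate_mset (Y i \<omega>) i)"
    have count_X: "count X i = (if i < n then Y i \<omega> else 0)" for i
      by (simp add: X_def count_sum)
    have "set_mset X \<subseteq> {..<n}"
      using count_X by (auto simp flip: count_greater_zero_iff split: if_splits)
    moreover have "size X = t"
      using \<omega> by (simp add: X_def)
    ultimately have "X \<in> multisets_of_size {..<n} t"
      by (simp add: multisets_of_size_def)
    then show "\<omega> \<in> (\<Union>X\<in>multisets_of_size {..<n} t. {\<omega>\<in>space M. \<forall>i<n. Y i \<omega> = count X i})"
      using \<omega> count_X by (intro UN_I[of X]) auto
  qed (auto simp: multisets_of_size_def sum_count_eq_size)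
  moreover have "X = X'"
    if "X \<in> multisets_of_size {..<n} t" "X' \<in> multisets_of_size {..<n} t"
      and "\<forall>i<n. count X i = count X' i" for X X'
    using that by (intro multiset_eqI) (metis count_eq_zero_iff lessThan_iff multisets_of_size_subset subsetD)
  then have "disjoint_family_on (\<lambda>X. {\<omega>\<in>space M. \<forall>i<n. Y i \<omega> = count X i}) (multisets_of_size {..<n} t)"
    by (fastforce simp: disjoint_family_on_def)
  ultimately show ?thesis
    by (simp only:) (rule finite_measure_finite_Union, auto)
qed

lemma (in prob_space) prob_eq_sums_1:
  assumes [measurable]: "Y \<in> measurable M (count_space UNIV)"
  shows "(\<lambda>t. prob {\<omega>\<in>space M. Y \<omega> = t}) sums 1"
proof -
  have "(\<lambda>t. prob {\<omega>\<in>space M. Y \<omega> = t}) sums prob (\<Union>t. {\<omega>\<in>space M. Y \<omega> = t})"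
    by (rule finite_measure_UNION) (auto simp: disjoint_family_on_def)
  moreover have "(\<Union>t. {\<omega>\<in>space M. Y \<omega> = t}) = space M"
    by auto
  ultimately show ?thesis
    by (simp add: prob_space)
qed

lemma filterlim_partial_sums_at_top:
  fixes k :: "nat \<Rightarrow> real"
  assumes nonneg: "\<And>i. k i \<ge> 0" and not_summable: "\<not> summable k"
  shows "filterlim (\<lambda>n. \<Sum>i\<le>n. k i) at_top sequentially"
  unfolding filterlim_at_top eventually_sequentially
proof
  fix B
  have "\<exists>N. (\<Sum>i\<le>N. k i) > B"
    using not_summable nonneg bounded_imp_summable[of k B] by (meson not_less)
  then obtain N where "(\<Sum>i\<le>N. k i) > B" ..
  moreover have "(\<Sum>i\<le>N. k i) \<le> (\<Sum>i\<le>n. k i)" if "n \<ge> N" for n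
    using that nonneg by (intro sum_mono2) auto
  ultimately show "\<exists>N. \<forall>n\<ge>N. B \<le> (\<Sum>i\<le>n. k i)"
    by (meson less_le_trans less_imp_le)
qed

section \<open>Sequences with MGWD finite-dimensional laws\<close>

locale MGWD_sequence = prob_space M
  for M :: "'w measure" +
  fixes X :: "nat \<Rightarrow> 'w \<Rightarrow> nat" and a \<rho> :: real and k :: "nat \<Rightarrow> real"
  assumes a_pos: "a > 0" and \<rho>_pos: "\<rho> > 0" and k_pos: "\<And>j. k j > 0"
    and X_measurable [measurable]: "\<And>j. X j \<in> measurable M (count_space UNIV)"
    and joint_MGWD: "\<And>s x. s \<ge> 1 \<Longrightarrow> prob {\<omega>\<in>space M. \<forall>i<s. X i \<omega> = x i} = MGWD a k \<rho> s x"
begin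

lemma partial_sum_pos: "(\<Sum>i\<le>n. k i) > 0"
  using k_pos by (intro sum_pos) auto

lemma prob_partial_sum_eq_GWD:
  "prob {\<omega>\<in>space M. (\<Sum>i\<le>n. X i \<omega>) = t} = GWD a (\<Sum>i\<le>n. k i) \<rho> t"
  using measure_sum_eq_sum_multisets_of_size[where n = "Suc n" and t = t] joint_MGWD
    sum_MGWD_multisets_of_size[OF a_pos \<rho>_pos k_pos, where n = "Suc n" and t = t]
  by (simp add: lessThan_Suc_atMost)

lemma distribution_suminf_of_tendsto:
  assumes "\<And>t. (\<lambda>n. GWD a (\<Sum>i\<le>n. k i) \<rho> t) \<longlonglongrightarrow> q t"
  shows "q sums prob {\<omega>\<in>space M. (\<Sum>j. ennreal (real (X j \<omega>))) < \<infinity>}"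
    and "prob {\<omega>\<in>space M. (\<Sum>j. ennreal (real (X j \<omega>))) = ennreal (real t)} = q t"
proof -
  have "(\<lambda>n. prob {\<omega>\<in>space M. (\<Sum>i<Suc n. X i \<omega>) = t}) \<longlonglongrightarrow> q t" for t
    using assms[of t] by (simp add: prob_partial_sum_eq_GWD lessThan_Suc_atMost)
  then have lim: "(\<lambda>n. prob {\<omega>\<in>space M. (\<Sum>i<n. X i \<omega>) = t}) \<longlonglongrightarrow> q t" for t
    by (rule filterlim_sequentially_Suc[THEN iffD1])
  show "q sums prob {\<omega>\<in>space M. (\<Sum>j. ennreal (real (X j \<omega>))) < \<infinity>}"
    using lim by (rule distribution_suminf_from_partial_sums(1)[where Y = X, OF X_measurable])
  show "prob {\<omega>\<in>space M. (\<Sum>j. ennreal (real (X j \<omega>))) = ennreal (real t)} = q t"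
    using lim by (rule distribution_suminf_from_partial_sums(2)[where Y = X, OF X_measurable])
qed

context
  assumes summable: "summable k"
begin

lemma partial_sums_tendsto: "(\<lambda>n. GWD a (\<Sum>i\<le>n. k i) \<rho> t) \<longlonglongrightarrow> GWD a (suminf k) \<rho> t"
  using a_pos \<rho>_pos k_pos summable by (intro tendsto_GWD summable_LIMSEQ' suminf_pos)

lemma prob_suminf_eq_GWD:
  "prob {\<omega>\<in>space M. (\<Sum>j. ennreal (real (X j \<omega>))) = ennreal (real t)} = GWD a (suminf k) \<rho> t"
  using partial_sums_tendsto by (rule distribution_suminf_of_tendsto)

lemma AE_suminf_finite: "AE \<omega> in M. (\<Sum>j. ennreal (real (X j \<omega>))) < \<infinity>"
proof -
  have "GWD a (suminf k) \<rho> sums 1"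
  proof (rule GWD_sums_1_of_tendsto)
    show "(\<lambda>n. \<Sum>i\<le>n. k i) \<longlonglongrightarrow> suminf k"
      using summable by (rule summable_LIMSEQ')
    show "(\<Sum>i\<le>n. k i) \<le> suminf k" for n
      using summable k_pos by (intro sum_le_suminf) (auto simp: less_imp_le)
    show "GWD a (\<Sum>i\<le>n. k i) \<rho> sums 1" for n
      using prob_eq_sums_1[of "\<lambda>\<omega>. \<Sum>i\<le>n. X i \<omega>"] by (simp add: prob_partial_sum_eq_GWD)
  qed (use a_pos \<rho>_pos k_pos summable partial_sum_pos in \<open>auto intro: suminf_pos\<close>)
  then have "prob {\<omega>\<in>space M. (\<Sum>j. ennreal (real (X j \<omega>))) < \<infinity>} = 1"
    using distribution_suminf_of_tendsto(1)[OF partial_sums_tendsto] sums_unique2 by blast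
  then show ?thesis
    by (auto dest: AE_prob_1)
qed

end

lemma AE_suminf_infinite:
  assumes "\<not> summable k"
  shows "AE \<omega> in M. (\<Sum>j. ennreal (real (X j \<omega>))) = \<infinity>"
proof -
  have "LIM n sequentially. (\<Sum>i\<le>n. k i) :> at_top"
    using k_pos assms by (intro filterlim_partial_sums_at_top) (auto simp: less_imp_le)
  then have "(\<lambda>n. GWD a (\<Sum>i\<le>n. k i) \<rho> t) \<longlonglongrightarrow> 0" for t
    by (rule filterlim_compose[OF GWD_tendsto_0_at_top[OF a_pos \<rho>_pos]])
  then have "(\<lambda>t. 0) sums prob {\<omega>\<in>space M. (\<Sum>j. ennreal (real (X j \<omega>))) < \<infinity>}"
    by (rule distribution_suminf_of_tendsto)
  then have "prob {\<omega>\<in>space M. (\<Sum>j. ennreal (real (X j \<omega>))) < \<infinity>} = 0"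
    using sums_zero by (rule sums_unique2)
  then have null: "emeasure M {\<omega>\<in>space M. (\<Sum>j. ennreal (real (X j \<omega>))) < \<infinity>} = 0"
    by (simp add: emeasure_eq_measure)
  have sets: "{\<omega>\<in>space M. (\<Sum>j. ennreal (real (X j \<omega>))) < \<infinity>} \<in> sets M"
    by measurable
  have eq: "{\<omega>\<in>space M. (\<Sum>j. ennreal (real (X j \<omega>))) \<noteq> \<infinity>}
      = {\<omega>\<in>space M. (\<Sum>j. ennreal (real (X j \<omega>))) < \<infinity>}"
    by (simp only: infinity_ennreal_def top.not_eq_extremum)
  show ?thesis
    by (subst AE_iff_measurable[OF sets eq]) (rule null)
qed

end

theorem theorem1:
  fixes M :: "'w measure" and X :: "nat \<Rightarrow> 'w \<Rightarrow> nat"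
    and a \<rho> :: real and k :: "nat \<Rightarrow> real"
  assumes "prob_space M"
    and "a > 0" and "\<rho> > 0" and "\<And>j. k j > 0"
    and "\<And>j. X j \<in> measurable M (count_space UNIV)"
    and "\<And>j n. measure M {\<omega> \<in> space M. X j \<omega> = n} = GWD a (k j) \<rho> n"
    and "\<And>s x. s \<ge> 1 \<Longrightarrow>
           measure M {\<omega> \<in> space M. \<forall>i<s. X i \<omega> = x i} = MGWD a k \<rho> s x"
  defines "S \<equiv> (\<lambda>\<omega>. \<Sum>j. ennreal (real (X j \<omega>)))"
  shows "(summable k \<longrightarrow>
            (AE \<omega> in M. S \<omega> < \<infinity>) \<and>
            (\<forall>n. measure M {\<omega> \<in> space M. S \<omega> = ennreal (real n)} = GWD a (suminf k) \<rho> n))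
       \<and> (\<not> summable k \<longrightarrow> (AE \<omega> in M. S \<omega> = \<infinity>))"
proof -
  interpret MGWD_sequence M X a \<rho> k
    using assms(1-5,7) by (simp add: MGWD_sequence_def MGWD_sequence_axioms_def)
  show ?thesis
    unfolding S_def by (intro conjI impI allI AE_suminf_finite prob_suminf_eq_GWD AE_suminf_infinite)
qed

end
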